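(* Let $k\ge 2$ and let $p\ge 2$ be an integer dividing $k$. If a finite simple graph $G$ admits a closed neighborhood balanced $k$-coloring, then $G$ also admits a closed neighborhood balanced $p$-coloring.
   Context: $N[v]=\{v\}\cup\{u : uv\in E(G)\}$. For an integer $m\ge 2$, a closed neighborhood balanced $m$-coloring of $G$ is a map $c: V(G)\to\{1,\dots,m\}$ such that for every vertex $v$ the numbers $|\{u\in N[v] : c(u)=i\}|$, $i=1,\dots,m$, are all equal. *)

theory Defs
  imports Main
begin

definition simple_graph :: "'a set \<Rightarrow> ('a \<Rightarrow> 'a \<Rightarrow> bool) \<Rightarrow> bool" where
  "simple_graph V E \<longleftrightarrow> finite V \<and> (\<forall>u v. E u v \<longrightarrow> u \<in> V \<and> v \<in> V)
     \<and> (\<forall>u v. E u v \<longrightarrow> E v u) \<and> (\<forall>v. \<not> E v v)"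

definition closed_nbhd :: "'a set \<Rightarrow> ('a \<Rightarrow> 'a \<Rightarrow> bool) \<Rightarrow> 'a \<Rightarrow> 'a set" where
  "closed_nbhd V E v = {v} \<union> {u \<in> V. E u v}"

definition cnb_coloring :: "'a set \<Rightarrow> ('a \<Rightarrow> 'a \<Rightarrow> bool) \<Rightarrow> nat \<Rightarrow> ('a \<Rightarrow> nat) \<Rightarrow> bool" where
  "cnb_coloring V E m c \<longleftrightarrow> (\<forall>v\<in>V. c v \<in> {1..m}) \<and>
     (\<forall>v\<in>V. \<forall>i\<in>{1..m}. \<forall>j\<in>{1..m}.
        card {u \<in> closed_nbhd V E v. c u = i} = card {u \<in> closed_nbhd V E v. c u = j})"

end

theory Submission
  imports Defs
begin

text \<open>Merge the k colours into p groups of k/p colours each, colour i going to group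
((i - 1) mod p) + 1. In every closed neighbourhood each old colour occurs equally often,
say s times, so each new colour occurs (k/p) * s times.\<close>

lemma card_fibre_comp:
  assumes "finite N" "finite C" "c ` N \<subseteq> C"
  shows "card {u \<in> N. f (c u) = j} = (\<Sum>i\<in>{i \<in> C. f i = j}. card {u \<in> N. c u = i})"
proof -
  have "{u \<in> N. f (c u) = j} = (\<Union>i\<in>{i \<in> C. f i = j}. {u \<in> N. c u = i})"
    using assms(3) by auto
  also have "card \<dots> = (\<Sum>i\<in>{i \<in> C. f i = j}. card {u \<in> N. c u = i})"
    by (rule card_UN_disjoint) (use assms(1,2) in auto)
  finally show ?thesis .
qed

lemma cnb_coloring_comp:
  assumes "finite V" "cnb_coloring V E m c"
    and "f ` {1..m} \<subseteq> {1..n}"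
    and "\<And>j. j \<in> {1..n} \<Longrightarrow> card {i \<in> {1..m}. f i = j} = q"
  shows "cnb_coloring V E n (\<lambda>v. f (c v))"
proof -
  have colours: "c v \<in> {1..m}" if "v \<in> V" for v
    using assms(2) that by (simp add: cnb_coloring_def)
  have classes_equal:
    "card {u \<in> closed_nbhd V E v. c u = i} = card {u \<in> closed_nbhd V E v. c u = i'}"
    if "v \<in> V" "i \<in> {1..m}" "i' \<in> {1..m}" for v i i'
    using assms(2) that unfolding cnb_coloring_def by blast
  \<comment> \<open>The colour of v itself is the reference class; this needs no assumption m > 0.\<close>
  have merged_class: "card {u \<in> closed_nbhd V E v. f (c u) = j}
      = q * card {u \<in> closed_nbhd V E v. c u = c v}"
    if v: "v \<in> V" and j: "j \<in> {1..n}" for v j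
  proof -
    let ?N = "closed_nbhd V E v"
    have "?N \<subseteq> V"
      using v by (auto simp: closed_nbhd_def)
    then have "finite ?N" "c ` ?N \<subseteq> {1..m}"
      using assms(1) colours finite_subset by auto
    then have "card {u \<in> ?N. f (c u) = j} = (\<Sum>i\<in>{i \<in> {1..m}. f i = j}. card {u \<in> ?N. c u = i})"
      by (intro card_fibre_comp) auto
    also have "\<dots> = (\<Sum>i\<in>{i \<in> {1..m}. f i = j}. card {u \<in> ?N. c u = c v})"
      using classes_equal[OF v _ colours[OF v]] by (intro sum.cong) auto
    also have "\<dots> = q * card {u \<in> ?N. c u = c v}"
      using assms(4)[OF j] by simp
    finally show ?thesis .
  qed
  show ?thesis
    unfolding cnb_coloring_def
  proof (intro conjI ballI)
    fix v
    assume "v \<in> V"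
    then show "f (c v) \<in> {1..n}"
      using assms(3) colours by blast
  next
    fix v j j'
    assume "v \<in> V" "j \<in> {1..n}" "j' \<in> {1..n}"
    then show "card {u \<in> closed_nbhd V E v. f (c u) = j}
        = card {u \<in> closed_nbhd V E v. f (c u) = j'}"
      using merged_class by simp
  qed
qed

lemma residue_fibre_eq_image:
  fixes p q j :: nat
  assumes "j \<in> {1..p}"
  shows "{i \<in> {1..p * q}. (i - 1) mod p + 1 = j} = (\<lambda>t. j + p * t) ` {..<q}"
proof (intro set_eqI iffI)
  fix i
  assume "i \<in> {i \<in> {1..p * q}. (i - 1) mod p + 1 = j}"
  then have i: "1 \<le> i" "i \<le> p * q" "(i - 1) mod p + 1 = j"
    by auto
  have "i = j + p * ((i - 1) div p)"
    using i mult_div_mod_eq[of p "i - 1"] by linarith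
  moreover have "(i - 1) div p < q"
    using i assms by (simp add: div_less_iff_less_mult mult.commute)
  ultimately show "i \<in> (\<lambda>t. j + p * t) ` {..<q}"
    by blast
next
  fix i
  assume "i \<in> (\<lambda>t. j + p * t) ` {..<q}"
  then obtain t where t: "t < q" "i = j + p * t"
    by auto
  have "p * Suc t \<le> p * q"
    using t(1) by (intro mult_le_mono2) simp
  then have "i \<le> p * q"
    using t(2) assms by simp
  moreover have "(i - 1) mod p = j - 1"
  proof -
    have "i - 1 = (j - 1) + p * t" "j - 1 < p"
      using t(2) assms by auto
    then show ?thesis
      by simp
  qed
  ultimately show "i \<in> {i \<in> {1..p * q}. (i - 1) mod p + 1 = j}"
    using t(2) assms by auto
qed

lemma card_residue_fibre:
  fixes p q j :: nat
  assumes "j \<in> {1..p}"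
  shows "card {i \<in> {1..p * q}. (i - 1) mod p + 1 = j} = q"
  unfolding residue_fibre_eq_image[OF assms]
  using assms by (subst card_image) (auto simp: inj_on_def)

theorem lemma2p4:
  fixes V :: "'a set" and E :: "'a \<Rightarrow> 'a \<Rightarrow> bool" and k p :: nat
  assumes "simple_graph V E"
    and "k \<ge> 2" and "p \<ge> 2" and "p dvd k"
    and "\<exists>c. cnb_coloring V E k c"
  shows "\<exists>c. cnb_coloring V E p c"
proof -
  obtain c where c: "cnb_coloring V E k c"
    using assms(5) by blast
  obtain q where k: "k = p * q"
    using assms(4) by blast
  have "finite V"
    using assms(1) by (simp add: simple_graph_def)
  moreover have "cnb_coloring V E (p * q) c"
    using c k by simp
  moreover have "(\<lambda>i. (i - 1) mod p + 1) ` {1..p * q} \<subseteq> {1..p}"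
    using assms(3) by (auto simp: Suc_leI)
  ultimately have "cnb_coloring V E p (\<lambda>v. (\<lambda>i. (i - 1) mod p + 1) (c v))"
    by (rule cnb_coloring_comp) (rule card_residue_fibre)
  then show ?thesis
    by blast
qed

end
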